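(* In the setting $|H|=1$ of the context (with Assumption 1), the Shor relaxation is exact ($v^\star=c^\star$) if for every $I\subseteq M$ with $|I|\ge2$ the convex problem in the variables $(\mu_i)_{i\in I}$, $x_1$, $w_1$: $\min\ \sum_{j\in N\setminus\{1\}}x_j(\boldsymbol{\mu})^2+x_1^2-w_1$ subject to $d_1^*+\sum_{i\in I}\xi_i\mu_i=0$; $c_1+\sum_{i\in I}a_{i1}\mu_i=0$; $\xi_iw_1+2a_{i1}x_1+2\sum_{j\in N\setminus\{1\}}a_{ij}x_j(\boldsymbol{\mu})=b_i$ for $i\in I$; $\xi_iw_1+2a_{i1}x_1+2\sum_{j\in N\setminus\{1\}}a_{ij}x_j(\boldsymbol{\mu})\le b_i$ for $i\in M\setminus I$; $\mu_i\ge0$ for $i\in I$, (where $\mu_i=0$ for $i\in M\setminus I$) has nonnegative optimal value (with the convention that an infeasible problem has optimal value $+\infty$).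
   Context: Let $N=\{1,\dots,n\}$, $M=\{1,\dots,m\}$. Data: reals $D_{jj}$ ($j\in N$), $c_j$, $a_{ij}$, $b_i$, $\xi_i$ ($i\in M$, $j\in N$). The diagonal QCQP (P) is $c^\star=\inf\{\sum_{j}D_{jj}x_j^2+2\sum_jc_jx_j : \xi_i\sum_jx_j^2+2\sum_ja_{ij}x_j\le b_i,\ i\in M\}$, i.e. all constraint Hessians are ${\bf A}^i=\xi_i{\bf I}$. Its Shor relaxation is $v^\star=\inf\{{\bf D}\bullet{\bf X}+2{\bf c}^\top{\bf x} : \xi_i\,\mathrm{trace}({\bf X})+2{\bf a}_i^\top{\bf x}\le b_i\ (i\in M),\ {\bf X}-{\bf x}{\bf x}^\top\succeq{\bf O}\}$ with ${\bf D}=\mathrm{diag}(D_{jj})$. Assumption 1: (P) is feasible; some $\bar{\bf y}\ge0$ has $\sum_i\bar y_i\xi_i>0$; the Shor relaxation has a feasible point in the interior of its feasible region. It is assumed that $d_1^*=\min_{j\in N}D_{jj}$ is attained uniquely at $j=1$. For $j\in N\setminus\{1\}$, $x_j(\boldsymbol{\mu})=-\frac{c_j+\sum_{i\in M}a_{ij}\mu_i}{D_{jj}-d_1^*}$. *)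

theory Defs
  imports "HOL-Analysis.Analysis"
begin

text \<open>Index sets N = {1..n}, M = {1..m}. Data: D j = D_jj (diagonal of D), c j, a i j = a_ij,
  b i, xi i. Vectors are nat => real (only entries in N matter), matrices nat => nat => real.\<close>

definition psd_on :: "nat set \<Rightarrow> (nat \<Rightarrow> nat \<Rightarrow> real) \<Rightarrow> bool" where
  "psd_on N Y \<longleftrightarrow> (\<forall>j\<in>N. \<forall>k\<in>N. Y j k = Y k j) \<and>
     (\<forall>v::nat \<Rightarrow> real. (\<Sum>j\<in>N. \<Sum>k\<in>N. v j * Y j k * v k) \<ge> 0)"

definition pd_on :: "nat set \<Rightarrow> (nat \<Rightarrow> nat \<Rightarrow> real) \<Rightarrow> bool" where
  "pd_on N Y \<longleftrightarrow> (\<forall>j\<in>N. \<forall>k\<in>N. Y j k = Y k j) \<and>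
     (\<forall>v::nat \<Rightarrow> real. (\<exists>j\<in>N. v j \<noteq> 0) \<longrightarrow> (\<Sum>j\<in>N. \<Sum>k\<in>N. v j * Y j k * v k) > 0)"

definition shifted :: "(nat \<Rightarrow> nat \<Rightarrow> real) \<Rightarrow> (nat \<Rightarrow> real) \<Rightarrow> nat \<Rightarrow> nat \<Rightarrow> real" where
  "shifted X x = (\<lambda>j k. X j k - x j * x k)"

definition P_feasible ::
  "nat \<Rightarrow> nat \<Rightarrow> (nat \<Rightarrow> nat \<Rightarrow> real) \<Rightarrow> (nat \<Rightarrow> real) \<Rightarrow> (nat \<Rightarrow> real) \<Rightarrow> (nat \<Rightarrow> real) set" where
  "P_feasible n m a b xi = {x. \<forall>i\<in>{1..m}.
      xi i * (\<Sum>j\<in>{1..n}. (x j)\<^sup>2) + 2 * (\<Sum>j\<in>{1..n}. a i j * x j) \<le> b i}"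

definition P_obj :: "nat \<Rightarrow> (nat \<Rightarrow> real) \<Rightarrow> (nat \<Rightarrow> real) \<Rightarrow> (nat \<Rightarrow> real) \<Rightarrow> real" where
  "P_obj n D c x = (\<Sum>j\<in>{1..n}. D j * (x j)\<^sup>2) + 2 * (\<Sum>j\<in>{1..n}. c j * x j)"

definition c_star ::
  "nat \<Rightarrow> nat \<Rightarrow> (nat \<Rightarrow> real) \<Rightarrow> (nat \<Rightarrow> real) \<Rightarrow> (nat \<Rightarrow> nat \<Rightarrow> real) \<Rightarrow> (nat \<Rightarrow> real) \<Rightarrow> (nat \<Rightarrow> real) \<Rightarrow> ereal" where
  "c_star n m D c a b xi = (INF x\<in>P_feasible n m a b xi. ereal (P_obj n D c x))"

definition Shor_feasible ::
  "nat \<Rightarrow> nat \<Rightarrow> (nat \<Rightarrow> nat \<Rightarrow> real) \<Rightarrow> (nat \<Rightarrow> real) \<Rightarrow> (nat \<Rightarrow> real) \<Rightarrow> ((nat \<Rightarrow> real) \<times> (nat \<Rightarrow> nat \<Rightarrow> real)) set" where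
  "Shor_feasible n m a b xi = {(x, X). (\<forall>i\<in>{1..m}.
      xi i * (\<Sum>j\<in>{1..n}. X j j) + 2 * (\<Sum>j\<in>{1..n}. a i j * x j) \<le> b i)
      \<and> psd_on {1..n} (shifted X x)}"

definition Shor_obj :: "nat \<Rightarrow> (nat \<Rightarrow> real) \<Rightarrow> (nat \<Rightarrow> real) \<Rightarrow> (nat \<Rightarrow> real) \<Rightarrow> (nat \<Rightarrow> nat \<Rightarrow> real) \<Rightarrow> real" where
  "Shor_obj n D c x X = (\<Sum>j\<in>{1..n}. D j * X j j) + 2 * (\<Sum>j\<in>{1..n}. c j * x j)"

definition v_star ::
  "nat \<Rightarrow> nat \<Rightarrow> (nat \<Rightarrow> real) \<Rightarrow> (nat \<Rightarrow> real) \<Rightarrow> (nat \<Rightarrow> nat \<Rightarrow> real) \<Rightarrow> (nat \<Rightarrow> real) \<Rightarrow> (nat \<Rightarrow> real) \<Rightarrow> ereal" where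
  "v_star n m D c a b xi = (INF p\<in>Shor_feasible n m a b xi. ereal (Shor_obj n D c (fst p) (snd p)))"

definition Shor_strictly_feasible ::
  "nat \<Rightarrow> nat \<Rightarrow> (nat \<Rightarrow> nat \<Rightarrow> real) \<Rightarrow> (nat \<Rightarrow> real) \<Rightarrow> (nat \<Rightarrow> real) \<Rightarrow> (nat \<Rightarrow> real) \<Rightarrow> (nat \<Rightarrow> nat \<Rightarrow> real) \<Rightarrow> bool" where
  "Shor_strictly_feasible n m a b xi x X \<longleftrightarrow> (\<forall>i\<in>{1..m}.
      xi i * (\<Sum>j\<in>{1..n}. X j j) + 2 * (\<Sum>j\<in>{1..n}. a i j * x j) < b i)
      \<and> pd_on {1..n} (shifted X x)"

definition d1_star :: "nat \<Rightarrow> (nat \<Rightarrow> real) \<Rightarrow> real" where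
  "d1_star n D = Min (D ` {1..n})"

definition x_mu ::
  "nat \<Rightarrow> nat \<Rightarrow> (nat \<Rightarrow> real) \<Rightarrow> (nat \<Rightarrow> real) \<Rightarrow> (nat \<Rightarrow> nat \<Rightarrow> real) \<Rightarrow> (nat \<Rightarrow> real) \<Rightarrow> nat \<Rightarrow> real" where
  "x_mu n m D c a \<mu> j = - (c j + (\<Sum>i\<in>{1..m}. a i j * \<mu> i)) / (D j - d1_star n D)"

definition sub_feasible ::
  "nat \<Rightarrow> nat \<Rightarrow> (nat \<Rightarrow> real) \<Rightarrow> (nat \<Rightarrow> real) \<Rightarrow> (nat \<Rightarrow> nat \<Rightarrow> real) \<Rightarrow> (nat \<Rightarrow> real) \<Rightarrow> (nat \<Rightarrow> real)
    \<Rightarrow> nat set \<Rightarrow> ((nat \<Rightarrow> real) \<times> real \<times> real) set" where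
  "sub_feasible n m D c a b xi I = {(\<mu>, x1, w1).
      (\<forall>i. i \<notin> I \<longrightarrow> \<mu> i = 0) \<and>
      d1_star n D + (\<Sum>i\<in>I. xi i * \<mu> i) = 0 \<and>
      c 1 + (\<Sum>i\<in>I. a i 1 * \<mu> i) = 0 \<and>
      (\<forall>i\<in>I. xi i * w1 + 2 * a i 1 * x1 + 2 * (\<Sum>j\<in>{1..n}-{1}. a i j * x_mu n m D c a \<mu> j) = b i) \<and>
      (\<forall>i\<in>{1..m}-I. xi i * w1 + 2 * a i 1 * x1 + 2 * (\<Sum>j\<in>{1..n}-{1}. a i j * x_mu n m D c a \<mu> j) \<le> b i) \<and>
      (\<forall>i\<in>I. \<mu> i \<ge> 0)}"

definition sub_obj ::
  "nat \<Rightarrow> nat \<Rightarrow> (nat \<Rightarrow> real) \<Rightarrow> (nat \<Rightarrow> real) \<Rightarrow> (nat \<Rightarrow> nat \<Rightarrow> real) \<Rightarrow> (nat \<Rightarrow> real) \<Rightarrow> real \<Rightarrow> real \<Rightarrow> real" where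
  "sub_obj n m D c a \<mu> x1 w1 = (\<Sum>j\<in>{1..n}-{1}. (x_mu n m D c a \<mu> j)\<^sup>2) + x1\<^sup>2 - w1"

text \<open>Optimal value (infimum in ereal; +infinity if infeasible).\<close>
definition sub_val ::
  "nat \<Rightarrow> nat \<Rightarrow> (nat \<Rightarrow> real) \<Rightarrow> (nat \<Rightarrow> real) \<Rightarrow> (nat \<Rightarrow> nat \<Rightarrow> real) \<Rightarrow> (nat \<Rightarrow> real) \<Rightarrow> (nat \<Rightarrow> real)
    \<Rightarrow> nat set \<Rightarrow> ereal" where
  "sub_val n m D c a b xi I =
     (INF p\<in>sub_feasible n m D c a b xi I. ereal (sub_obj n m D c a (fst p) (fst (snd p)) (snd (snd p))))"

end

theory Submission
  imports Defs
begin

text \<open>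
  The Shor relaxation only sees \<open>x\<close> and the trace \<open>w = tr X\<close>, which satisfy \<open>|x|\<^sup>2 \<le> w\<close>.
  Since \<open>D\<^sub>1\<close> is the least diagonal entry, \<open>v\<^sup>\<star>\<close> is bounded below by the minimum of
  \<open>g(w,x) = \<Sum>(D\<^sub>j - D\<^sub>1) x\<^sub>j\<^sup>2 + 2 c\<cdot>x + D\<^sub>1 w\<close> over the convex set \<open>K\<close> of pairs with \<open>|x|\<^sup>2 \<le> w\<close>
  satisfying the linear constraints; \<open>K\<close> is compact because a nonnegative combination of the
  constraints has a positive \<open>w\<close>-coefficient. Among the minimisers of \<open>g\<close> take one of least slack
  \<open>w - |x|\<^sup>2\<close>. If that slack were positive, then with at most one active constraint one could move
  in the \<open>(w, x\<^sub>1)\<close>-plane without changing \<open>g\<close> and decrease the slack, while with at least two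
  active constraints the KKT multipliers (Farkas' lemma) give a feasible point of the subproblem for
  the active set whose value is minus the slack. So the slack vanishes, the minimiser is feasible
  for (P), and \<open>c\<^sup>\<star> \<le> min g \<le> v\<^sup>\<star> \<le> c\<^sup>\<star>\<close>.
\<close>

definition dot_on :: "nat set \<Rightarrow> (nat \<Rightarrow> real) \<Rightarrow> (nat \<Rightarrow> real) \<Rightarrow> real" where
  "dot_on J u v = (\<Sum>j\<in>J. u j * v j)"

lemma dot_on_diff_scaled_left:
  "dot_on J (\<lambda>j. f j - s * g j) z = dot_on J f z - s * dot_on J g z"
  by (simp add: dot_on_def algebra_simps sum_subtractf sum_distrib_left)

lemma dot_on_diff_scaled_right:
  "dot_on J f (\<lambda>j. z j - s * g j) = dot_on J f z - s * dot_on J f g"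
  by (simp add: dot_on_def algebra_simps sum_subtractf sum_distrib_left)

lemma dot_on_add_scaled_right:
  "dot_on J u (\<lambda>j. p j + t * y j) = dot_on J u p + t * dot_on J u y"
  by (simp add: dot_on_def algebra_simps sum.distrib sum_distrib_left)

lemma dot_on_uminus_left: "dot_on J (\<lambda>j. - u j) y = - dot_on J u y"
  by (simp add: dot_on_def sum_negf)

lemma dot_on_uminus_right: "dot_on J u (\<lambda>j. - y j) = - dot_on J u y"
  by (simp add: dot_on_def sum_negf)

lemma tendsto_dot_on:
  assumes "\<forall>j\<in>J. (\<lambda>k. P k j) \<longlonglongrightarrow> L j"
  shows "(\<lambda>k. dot_on J u (P k)) \<longlonglongrightarrow> dot_on J u L"
  unfolding dot_on_def using assms by (intro tendsto_intros) auto

subsection \<open>Farkas' lemma\<close>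

text \<open>Gaussian elimination of the constraint \<open>v k\<close> along a direction \<open>y'\<close> with \<open>v k \<cdot> y' > 0\<close>.\<close>
lemma farkas_eliminate:
  fixes v :: "nat \<Rightarrow> nat \<Rightarrow> real"
  assumes hyp: "\<forall>y. (\<forall>i\<in>insert k A. dot_on J (v i) y \<le> 0) \<longrightarrow> dot_on J w y \<le> 0"
    and pos: "dot_on J (v k) y' > 0"
  defines "\<beta> \<equiv> dot_on J (v k) y'"
  shows "\<forall>z. (\<forall>i\<in>A. dot_on J (\<lambda>j. v i j - (dot_on J (v i) y' / \<beta>) * v k j) z \<le> 0)
           \<longrightarrow> dot_on J (\<lambda>j. w j - (dot_on J w y' / \<beta>) * v k j) z \<le> 0"
proof (intro allI impI)
  fix z
  assume z: "\<forall>i\<in>A. dot_on J (\<lambda>j. v i j - (dot_on J (v i) y' / \<beta>) * v k j) z \<le> 0"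
  define y where "y = (\<lambda>j. z j - (dot_on J (v k) z / \<beta>) * y' j)"
  have shift: "dot_on J u y = dot_on J (\<lambda>j. u j - (dot_on J u y' / \<beta>) * v k j) z" for u
    unfolding y_def dot_on_diff_scaled_left dot_on_diff_scaled_right
    by (simp add: dot_on_def mult.commute)
  have "dot_on J (v k) y = 0"
    using pos unfolding y_def dot_on_diff_scaled_right by (simp add: \<beta>_def)
  moreover have "\<forall>i\<in>A. dot_on J (v i) y \<le> 0" using z by (simp only: shift)
  ultimately have "\<forall>i\<in>insert k A. dot_on J (v i) y \<le> 0" by simp
  then show "dot_on J (\<lambda>j. w j - (dot_on J w y' / \<beta>) * v k j) z \<le> 0"
    using hyp by (simp only: shift[symmetric])
qed

lemma farkas_lemma:
  fixes v :: "nat \<Rightarrow> nat \<Rightarrow> real" and w :: "nat \<Rightarrow> real"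
  assumes "finite A" "finite J"
    and "\<forall>y. (\<forall>i\<in>A. dot_on J (v i) y \<le> 0) \<longrightarrow> dot_on J w y \<le> 0"
  shows "\<exists>\<mu>. (\<forall>i\<in>A. \<mu> i \<ge> 0) \<and> (\<forall>j\<in>J. w j = (\<Sum>i\<in>A. \<mu> i * v i j))"
  using assms(1,3)
proof (induction A arbitrary: v w rule: finite_induct)
  case empty
  then have "(\<Sum>j\<in>J. (w j)\<^sup>2) \<le> 0" by (auto simp: dot_on_def power2_eq_square)
  then have "\<forall>j\<in>J. w j = 0"
    using sum_nonneg_eq_0_iff[OF assms(2), of "\<lambda>j. (w j)\<^sup>2"] by (simp add: antisym sum_nonneg)
  then show ?case by auto
next
  case (insert k A)
  show ?case
  proof (cases "\<forall>y. (\<forall>i\<in>A. dot_on J (v i) y \<le> 0) \<longrightarrow> dot_on J w y \<le> 0")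
    case True
    then obtain \<mu> where "\<forall>i\<in>A. \<mu> i \<ge> 0" "\<forall>j\<in>J. w j = (\<Sum>i\<in>A. \<mu> i * v i j)"
      using insert.IH by blast
    with insert.hyps show ?thesis
      by (intro exI[of _ "\<mu>(k := 0)"]) (auto intro!: sum.cong)
  next
    case False
    then obtain y' where y': "\<forall>i\<in>A. dot_on J (v i) y' \<le> 0" "dot_on J w y' > 0"
      by (auto simp: not_le)
    define \<beta> where "\<beta> = dot_on J (v k) y'"
    have \<beta>: "\<beta> > 0" using insert.prems y' by (auto simp: \<beta>_def not_le[symmetric])
    obtain la where la: "\<forall>i\<in>A. la i \<ge> 0"
      "\<forall>j\<in>J. w j - (dot_on J w y' / \<beta>) * v k j
              = (\<Sum>i\<in>A. la i * (v i j - (dot_on J (v i) y' / \<beta>) * v k j))"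
      using insert.IH[OF farkas_eliminate[OF insert.prems \<beta>[unfolded \<beta>_def]]]
      unfolding \<beta>_def by blast
    define \<mu> where "\<mu> = la(k := (dot_on J w y' - (\<Sum>i\<in>A. la i * dot_on J (v i) y')) / \<beta>)"
    have "(\<Sum>i\<in>A. la i * dot_on J (v i) y') \<le> 0"
      using la(1) y'(1) by (intro sum_nonpos) (simp add: mult_nonneg_nonpos)
    then have "\<forall>i\<in>insert k A. \<mu> i \<ge> 0"
      using \<beta> y'(2) la(1) insert.hyps by (auto simp: \<mu>_def)
    moreover have "w j = (\<Sum>i\<in>insert k A. \<mu> i * v i j)" if j: "j \<in> J" for j
    proof -
      have "(\<Sum>i\<in>A. la i * (v i j - (dot_on J (v i) y' / \<beta>) * v k j))
          = (\<Sum>i\<in>A. la i * v i j) - (\<Sum>i\<in>A. la i * dot_on J (v i) y') / \<beta> * v k j"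
      proof -
        have "(\<Sum>i\<in>A. la i * (v i j - (dot_on J (v i) y' / \<beta>) * v k j))
            = (\<Sum>i\<in>A. la i * v i j - (la i * dot_on J (v i) y') / \<beta> * v k j)"
          by (rule sum.cong) (simp_all add: algebra_simps)
        then show ?thesis by (simp add: sum_subtractf sum_distrib_right sum_divide_distrib)
      qed
      moreover have "(\<Sum>i\<in>insert k A. \<mu> i * v i j) = \<mu> k * v k j + (\<Sum>i\<in>A. la i * v i j)"
        using insert.hyps by (auto simp: \<mu>_def intro!: sum.cong)
      moreover have "\<mu> k * v k j = dot_on J w y' / \<beta> * v k j
          - (\<Sum>i\<in>A. la i * dot_on J (v i) y') / \<beta> * v k j"
        by (simp add: \<mu>_def diff_divide_distrib left_diff_distrib)
      moreover have "w j - (dot_on J w y' / \<beta>) * v k j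
          = (\<Sum>i\<in>A. la i * (v i j - (dot_on J (v i) y' / \<beta>) * v k j))"
        using la(2) j by blast
      ultimately show ?thesis by linarith
    qed
    ultimately show ?thesis by blast
  qed
qed

subsection \<open>Minima over sets bounded in finitely many coordinates\<close>

lemma convergent_subseq_finite_coords:
  fixes P :: "nat \<Rightarrow> nat \<Rightarrow> real"
  assumes "finite J" "\<forall>k. \<forall>j\<in>J. \<bar>P k j\<bar> \<le> B"
  shows "\<exists>r. strict_mono r \<and> (\<forall>j\<in>J. convergent (\<lambda>k. P (r k) j))"
  using assms
proof (induction J rule: finite_induct)
  case empty
  show ?case by (rule exI[of _ id]) (simp add: strict_mono_def)
next
  case (insert j0 J)
  then obtain r where r: "strict_mono r" "\<forall>j\<in>J. convergent (\<lambda>k. P (r k) j)" by auto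
  have "bounded (range (\<lambda>k. P (r k) j0))"
    using insert.prems by (intro boundedI[where B=B]) auto
  then obtain l r2 where r2: "strict_mono r2" "((\<lambda>k. P (r k) j0) \<circ> r2) \<longlonglongrightarrow> l"
    using bounded_imp_convergent_subsequence by blast
  have "convergent (\<lambda>k. P ((r \<circ> r2) k) j)" if "j \<in> insert j0 J" for j
    using that
  proof
    assume "j = j0" then show ?thesis using r2(2) by (auto simp: convergent_def o_def)
  next
    assume "j \<in> J"
    then obtain L where "(\<lambda>k. P (r k) j) \<longlonglongrightarrow> L" using r(2) by (auto simp: convergent_def)
    from LIMSEQ_subseq_LIMSEQ[OF this r2(1)] show ?thesis by (auto simp: convergent_def o_def)
  qed
  with r(1) r2(1) show ?case by (blast intro: strict_mono_o)
qed

lemma coordwise_limit_subseq: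
  fixes S :: "(nat \<Rightarrow> real) set" and h :: "(nat \<Rightarrow> real) \<Rightarrow> real"
    and Q :: "nat \<Rightarrow> nat \<Rightarrow> real"
  assumes fin: "finite J" and bnd: "\<forall>p\<in>S. \<forall>j\<in>J. \<bar>p j\<bar> \<le> B"
    and closed: "\<And>P L. \<forall>k. P k \<in> S \<Longrightarrow> \<forall>j\<in>J. (\<lambda>k. P k j) \<longlonglongrightarrow> L j \<Longrightarrow> L \<in> S"
    and cont: "\<And>P L. \<forall>k. P k \<in> S \<Longrightarrow> \<forall>j\<in>J. (\<lambda>k. P k j) \<longlonglongrightarrow> L j
                 \<Longrightarrow> (\<lambda>k. h (P k)) \<longlonglongrightarrow> h L"
    and Q: "\<forall>k. Q k \<in> S"
  shows "\<exists>r L. strict_mono r \<and> L \<in> S \<and> (\<lambda>k. h (Q (r k))) \<longlonglongrightarrow> h L"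
proof -
  obtain r where r: "strict_mono r" "\<forall>j\<in>J. convergent (\<lambda>k. Q (r k) j)"
    using convergent_subseq_finite_coords[OF fin, of Q B] Q bnd by auto
  define L where "L = (\<lambda>j. lim (\<lambda>k. Q (r k) j))"
  have "\<forall>j\<in>J. (\<lambda>k. Q (r k) j) \<longlonglongrightarrow> L j"
    using r(2) by (auto simp: L_def convergent_LIMSEQ_iff)
  with Q closed[of "\<lambda>k. Q (r k)" L] cont[of "\<lambda>k. Q (r k)" L] r(1) show ?thesis by auto
qed

lemma coordwise_compact_attains_min:
  fixes S :: "(nat \<Rightarrow> real) set" and h :: "(nat \<Rightarrow> real) \<Rightarrow> real"
  assumes fin: "finite J" and ne: "S \<noteq> {}" and bnd: "\<forall>p\<in>S. \<forall>j\<in>J. \<bar>p j\<bar> \<le> B"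
    and closed: "\<And>P L. \<forall>k. P k \<in> S \<Longrightarrow> \<forall>j\<in>J. (\<lambda>k. P k j) \<longlonglongrightarrow> L j \<Longrightarrow> L \<in> S"
    and cont: "\<And>P L. \<forall>k. P k \<in> S \<Longrightarrow> \<forall>j\<in>J. (\<lambda>k. P k j) \<longlonglongrightarrow> L j
                 \<Longrightarrow> (\<lambda>k. h (P k)) \<longlonglongrightarrow> h L"
  shows "\<exists>p\<in>S. \<forall>p'\<in>S. h p \<le> h p'"
proof -
  have subseq: "\<exists>r L. strict_mono r \<and> L \<in> S \<and> (\<lambda>k. h (Q (r k))) \<longlonglongrightarrow> h L"
    if "\<forall>k. Q k \<in> S" for Q :: "nat \<Rightarrow> nat \<Rightarrow> real"
    using fin bnd closed cont that by (rule coordwise_limit_subseq)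
  have bdd: "bdd_below (h ` S)"
  proof (rule ccontr)
    assume "\<not> bdd_below (h ` S)"
    then have "\<forall>k::nat. \<exists>p\<in>S. h p < - real k"
      by (metis bdd_belowI2 not_le)
    then obtain P where P: "\<forall>k. P k \<in> S \<and> h (P k) < - real k" by metis
    then obtain r L where rL: "strict_mono r" "(\<lambda>k. h (P (r k))) \<longlonglongrightarrow> h L"
      using subseq by blast
    then obtain M where M: "\<forall>k. norm (h (P (r k))) \<le> M"
      by (metis BseqE convergent_def convergent_imp_Bseq)
    obtain k :: nat where k: "M < real k" using reals_Archimedean2 by blast
    have "real k \<le> real (r k)" using seq_suble[OF rL(1)] by simp
    then show False using P M[rule_format, of k] k by (smt (verit) norm_ge_zero real_norm_def)
  qed
  define v where "v = Inf (h ` S)"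
  have "\<forall>k::nat. \<exists>p\<in>S. h p < v + inverse (real (Suc k))"
    using cInf_lessD[of "h ` S"] ne by (simp add: v_def)
  then obtain P where P: "\<forall>k. P k \<in> S \<and> h (P k) < v + inverse (real (Suc k))" by metis
  then obtain r L where rL: "strict_mono r" "L \<in> S" "(\<lambda>k. h (P (r k))) \<longlonglongrightarrow> h L"
    using subseq by blast
  have "(\<lambda>k. v + inverse (real (Suc (r k)))) \<longlonglongrightarrow> v + 0"
    using tendsto_add[OF tendsto_const LIMSEQ_subseq_LIMSEQ[OF LIMSEQ_inverse_real_of_nat rL(1)]]
    by (simp add: o_def)
  then have "h L \<le> v"
    using LIMSEQ_le[OF rL(3)] P by (simp add: less_imp_le)
  then have "\<forall>p'\<in>S. h L \<le> h p'" using cInf_lower[OF _ bdd] v_def by fastforce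
  with rL(2) show ?thesis by blast
qed

lemma psd_on_diag_nonneg:
  assumes "psd_on N Y" "finite N" "j \<in> N"
  shows "Y j j \<ge> 0"
proof -
  let ?e = "\<lambda>k. if k = j then 1 else 0 :: real"
  have "\<forall>v. 0 \<le> (\<Sum>j'\<in>N. \<Sum>k\<in>N. v j' * Y j' k * v k)"
    using assms(1) unfolding psd_on_def by blast
  then have "0 \<le> (\<Sum>j'\<in>N. \<Sum>k\<in>N. ?e j' * Y j' k * ?e k)" by (rule spec)
  also have "\<dots> = (\<Sum>j'\<in>N. if j' = j then Y j j else 0)"
    using assms(2,3) by (intro sum.cong) (simp_all add: if_distrib sum.delta cong: if_cong)
  also have "\<dots> = Y j j" using assms(2,3) by simp
  finally show ?thesis .
qed

subsection \<open>The problem lifted to \<open>(w, x)\<close>\<close>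

text \<open>Points are \<open>p :: nat \<Rightarrow> real\<close> with \<open>p 0 = w\<close> (standing for \<open>tr X\<close>) and \<open>p j = x\<^sub>j\<close> for \<open>j \<in> {1..n}\<close>.\<close>

definition lift_row :: "(nat \<Rightarrow> real) \<Rightarrow> (nat \<Rightarrow> nat \<Rightarrow> real) \<Rightarrow> nat \<Rightarrow> nat \<Rightarrow> real" where
  "lift_row xi a i = (\<lambda>j. if j = 0 then xi i else 2 * a i j)"

definition lifted_feasible ::
  "nat \<Rightarrow> nat \<Rightarrow> (nat \<Rightarrow> nat \<Rightarrow> real) \<Rightarrow> (nat \<Rightarrow> real) \<Rightarrow> (nat \<Rightarrow> real) \<Rightarrow> (nat \<Rightarrow> real) set" where
  "lifted_feasible n m a b xi = {p. (\<forall>i\<in>{1..m}. dot_on {0..n} (lift_row xi a i) p \<le> b i)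
                                    \<and> (\<Sum>j\<in>{1..n}. (p j)\<^sup>2) \<le> p 0}"

definition lifted_obj :: "nat \<Rightarrow> (nat \<Rightarrow> real) \<Rightarrow> (nat \<Rightarrow> real) \<Rightarrow> (nat \<Rightarrow> real) \<Rightarrow> real" where
  "lifted_obj n D c p = (\<Sum>j\<in>{1..n}. (D j - D 1) * (p j)\<^sup>2) + 2 * (\<Sum>j\<in>{1..n}. c j * p j) + D 1 * p 0"

definition lifted_grad :: "nat \<Rightarrow> (nat \<Rightarrow> real) \<Rightarrow> (nat \<Rightarrow> real) \<Rightarrow> (nat \<Rightarrow> real) \<Rightarrow> nat \<Rightarrow> real" where
  "lifted_grad n D c p = (\<lambda>j. if j = 0 then D 1 else 2 * (D j - D 1) * p j + 2 * c j)"

definition slack :: "nat \<Rightarrow> (nat \<Rightarrow> real) \<Rightarrow> real" where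
  "slack n p = p 0 - (\<Sum>j\<in>{1..n}. (p j)\<^sup>2)"

definition active_constraints ::
  "nat \<Rightarrow> nat \<Rightarrow> (nat \<Rightarrow> nat \<Rightarrow> real) \<Rightarrow> (nat \<Rightarrow> real) \<Rightarrow> (nat \<Rightarrow> real) \<Rightarrow> (nat \<Rightarrow> real) \<Rightarrow> nat set" where
  "active_constraints n m a b xi p = {i\<in>{1..m}. dot_on {0..n} (lift_row xi a i) p = b i}"

lemma dot_on_zero_split: "dot_on {0..n} u p = u 0 * p 0 + (\<Sum>j\<in>{1..n}. u j * p j)"
  unfolding dot_on_def by (simp add: sum.atLeast_Suc_atMost)

lemma dot_lift_row:
  "dot_on {0..n} (lift_row xi a i) p = xi i * p 0 + 2 * (\<Sum>j\<in>{1..n}. a i j * p j)"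
proof -
  have "(\<Sum>j\<in>{1..n}. lift_row xi a i j * p j) = (\<Sum>j\<in>{1..n}. 2 * (a i j * p j))"
    by (rule sum.cong) (auto simp: lift_row_def)
  then show ?thesis by (simp add: dot_on_zero_split lift_row_def sum_distrib_left)
qed

lemma lifted_feasible_iff:
  "p \<in> lifted_feasible n m a b xi \<longleftrightarrow>
     (\<forall>i\<in>{1..m}. xi i * p 0 + 2 * (\<Sum>j\<in>{1..n}. a i j * p j) \<le> b i) \<and> (\<Sum>j\<in>{1..n}. (p j)\<^sup>2) \<le> p 0"
  by (simp add: lifted_feasible_def dot_lift_row)

lemma lift_in_lifted_feasible:
  assumes "\<forall>i\<in>{1..m}. xi i * w + 2 * (\<Sum>j\<in>{1..n}. a i j * x j) \<le> b i"
    and "(\<Sum>j\<in>{1..n}. (x j)\<^sup>2) \<le> w"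
  shows "(\<lambda>j. if j = 0 then w else x j) \<in> lifted_feasible n m a b xi"
proof -
  have "(\<Sum>j\<in>{1..n}. f j * (if j = 0 then w else x j)) = (\<Sum>j\<in>{1..n}. f j * x j)"
    and "(\<Sum>j\<in>{1..n}. (if j = 0 then w else x j)\<^sup>2) = (\<Sum>j\<in>{1..n}. (x j)\<^sup>2)" for f
    by (auto intro: sum.cong)
  with assms show ?thesis by (simp add: lifted_feasible_iff)
qed

lemma lifted_obj_add_scaled:
  "lifted_obj n D c (\<lambda>j. p j + t * y j) = lifted_obj n D c p + t * dot_on {0..n} (lifted_grad n D c p) y
     + t\<^sup>2 * (\<Sum>j\<in>{1..n}. (D j - D 1) * (y j)\<^sup>2)"
proof -
  have "(\<Sum>j\<in>{1..n}. lifted_grad n D c p j * y j)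
      = (\<Sum>j\<in>{1..n}. (2 * (D j - D 1) * p j + 2 * c j) * y j)"
    by (rule sum.cong) (auto simp: lifted_grad_def)
  also have "\<dots> = (\<Sum>j\<in>{1..n}. 2 * (D j - D 1) * p j * y j) + 2 * (\<Sum>j\<in>{1..n}. c j * y j)"
    by (simp only: distrib_right sum.distrib) (simp add: sum_distrib_left mult.assoc)
  finally have grad: "(\<Sum>j\<in>{1..n}. lifted_grad n D c p j * y j) = \<dots>" .
  have "(\<Sum>j\<in>{1..n}. (D j - D 1) * (p j + t * y j)\<^sup>2) = (\<Sum>j\<in>{1..n}. (D j - D 1) * (p j)\<^sup>2
     + t * (2 * (D j - D 1) * p j * y j) + t\<^sup>2 * ((D j - D 1) * (y j)\<^sup>2))"
    by (rule sum.cong) (simp_all add: power2_eq_square algebra_simps)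
  also have "\<dots> = (\<Sum>j\<in>{1..n}. (D j - D 1) * (p j)\<^sup>2) + t * (\<Sum>j\<in>{1..n}. 2 * (D j - D 1) * p j * y j)
     + t\<^sup>2 * (\<Sum>j\<in>{1..n}. (D j - D 1) * (y j)\<^sup>2)"
    by (simp add: sum.distrib sum_distrib_left)
  finally have quad: "(\<Sum>j\<in>{1..n}. (D j - D 1) * (p j + t * y j)\<^sup>2) = \<dots>" .
  have lin: "(\<Sum>j\<in>{1..n}. c j * (p j + t * y j)) = (\<Sum>j\<in>{1..n}. c j * p j) + t * (\<Sum>j\<in>{1..n}. c j * y j)"
    by (simp add: algebra_simps sum.distrib sum_distrib_left)
  show ?thesis
    unfolding lifted_obj_def quad lin dot_on_zero_split[of n "lifted_grad n D c p"] grad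
    by (simp add: lifted_grad_def algebra_simps)
qed

lemma lifted_feasible_eventually_along:
  assumes p: "p \<in> lifted_feasible n m a b xi" and s: "slack n p > 0"
    and y: "\<forall>i\<in>active_constraints n m a b xi p. dot_on {0..n} (lift_row xi a i) y \<le> 0"
  shows "eventually (\<lambda>t. (\<lambda>j. p j + t * y j) \<in> lifted_feasible n m a b xi) (at_right 0)"
proof -
  have "eventually (\<lambda>t. dot_on {0..n} (lift_row xi a i) (\<lambda>j. p j + t * y j) \<le> b i) (at_right 0)"
    if i: "i \<in> {1..m}" for i
  proof (cases "i \<in> active_constraints n m a b xi p")
    case True
    then have "dot_on {0..n} (lift_row xi a i) p = b i" "dot_on {0..n} (lift_row xi a i) y \<le> 0"
      using y by (auto simp: active_constraints_def)
    then show ?thesis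
      by (intro eventually_mono[OF eventually_at_right_less[of "0::real"]])
        (simp add: dot_on_add_scaled_right mult_nonneg_nonpos)
  next
    case False
    then have "dot_on {0..n} (lift_row xi a i) p < b i"
      using p i by (auto simp: active_constraints_def lifted_feasible_def order_le_less)
    moreover have "((\<lambda>t. dot_on {0..n} (lift_row xi a i) (\<lambda>j. p j + t * y j))
        \<longlongrightarrow> dot_on {0..n} (lift_row xi a i) p + 0 * dot_on {0..n} (lift_row xi a i) y) (at_right 0)"
      unfolding dot_on_add_scaled_right by (intro tendsto_intros)
    ultimately show ?thesis by (intro eventually_mono[OF order_tendstoD(2)]) auto
  qed
  then have lin: "eventually (\<lambda>t. \<forall>i\<in>{1..m}. dot_on {0..n} (lift_row xi a i) (\<lambda>j. p j + t * y j) \<le> b i)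
      (at_right 0)"
    by (intro eventually_ball_finite) auto
  have "((\<lambda>t. (p 0 + t * y 0) - (\<Sum>j\<in>{1..n}. (p j + t * y j)\<^sup>2)) \<longlongrightarrow>
          (p 0 + 0 * y 0) - (\<Sum>j\<in>{1..n}. (p j + 0 * y j)\<^sup>2)) (at_right 0)"
    by (intro tendsto_intros)
  then have "eventually (\<lambda>t. 0 < (p 0 + t * y 0) - (\<Sum>j\<in>{1..n}. (p j + t * y j)\<^sup>2)) (at_right 0)"
    using s by (intro order_tendstoD(1)) (auto simp: slack_def)
  with lin show ?thesis
    by eventually_elim (auto simp: lifted_feasible_def)
qed

lemma lifted_min_no_descent:
  assumes p: "p \<in> lifted_feasible n m a b xi"
    and opt: "\<forall>p'\<in>lifted_feasible n m a b xi. lifted_obj n D c p \<le> lifted_obj n D c p'"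
    and s: "slack n p > 0"
    and y: "\<forall>i\<in>active_constraints n m a b xi p. dot_on {0..n} (lift_row xi a i) y \<le> 0"
  shows "dot_on {0..n} (lifted_grad n D c p) y \<ge> 0"
proof (rule ccontr)
  define G where "G = dot_on {0..n} (lifted_grad n D c p) y"
  define Q where "Q = (\<Sum>j\<in>{1..n}. (D j - D 1) * (y j)\<^sup>2)"
  assume "\<not> ?thesis"
  then have G: "G < 0" by (simp add: G_def)
  have "((\<lambda>t. t * Q) \<longlongrightarrow> 0 * Q) (at_right 0)" by (intro tendsto_intros)
  then have "eventually (\<lambda>t. t * Q < - G) (at_right 0)"
    using G by (intro order_tendstoD(2)) auto
  then have "eventually (\<lambda>t. 0 < t \<and> t * Q < - G \<and> (\<lambda>j. p j + t * y j) \<in> lifted_feasible n m a b xi)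
      (at_right 0)"
    using eventually_at_right_less lifted_feasible_eventually_along[OF p s y]
    by eventually_elim auto
  then obtain t where t: "0 < t" "t * Q < - G" "(\<lambda>j. p j + t * y j) \<in> lifted_feasible n m a b xi"
    using eventually_happens[of _ "at_right (0::real)"] by (auto simp: trivial_limit_at_right_real)
  have "lifted_obj n D c (\<lambda>j. p j + t * y j) = lifted_obj n D c p + t * (G + t * Q)"
    by (simp add: lifted_obj_add_scaled G_def Q_def power2_eq_square algebra_simps)
  moreover have "t * (G + t * Q) < 0" using t by (intro mult_pos_neg) auto
  ultimately show False using opt t(3) by fastforce
qed

lemma neg_quadratic_le_linear:
  fixes Y \<alpha> x :: real
  assumes "Y > 0"
  shows "- (Y / 2 * x\<^sup>2 + 2 * \<alpha>\<^sup>2 / Y) \<le> 2 * (\<alpha> * x)"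
proof -
  have "(Y * x + 2 * \<alpha>)\<^sup>2 = 2 * Y * (Y / 2 * x\<^sup>2 + 2 * (\<alpha> * x) + 2 * \<alpha>\<^sup>2 / Y)"
    using assms by (simp add: field_simps power2_eq_square)
  moreover have "0 \<le> (Y * x + 2 * \<alpha>)\<^sup>2" by simp
  ultimately have "0 \<le> Y / 2 * x\<^sup>2 + 2 * (\<alpha> * x) + 2 * \<alpha>\<^sup>2 / Y"
    using assms by (simp add: zero_le_mult_iff)
  then show ?thesis by linarith
qed

lemma abs_le_max_one_if_square_le: "(x::real)\<^sup>2 \<le> B \<Longrightarrow> \<bar>x\<bar> \<le> max 1 B"
proof (cases "\<bar>x\<bar> \<le> 1")
  case False
  then have "1 * \<bar>x\<bar> \<le> \<bar>x\<bar> * \<bar>x\<bar>" by (intro mult_right_mono) auto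
  also have "\<bar>x\<bar> * \<bar>x\<bar> = x\<^sup>2" by (simp add: power2_eq_square)
  finally show "x\<^sup>2 \<le> B \<Longrightarrow> ?thesis" by simp
qed simp

text \<open>The combination \<open>y\<close> of the constraints bounds \<open>w\<close> from above, and \<open>|x|\<^sup>2 \<le> w\<close> then bounds everything.\<close>
lemma lifted_feasible_bounded:
  assumes y: "\<forall>i\<in>{1..m}. y i \<ge> 0" and Y: "(\<Sum>i\<in>{1..m}. y i * xi i) > 0"
  shows "\<exists>B. \<forall>p\<in>lifted_feasible n m a b xi. \<forall>j\<in>{0..n}. \<bar>p j\<bar> \<le> B"
proof -
  define Y where "Y = (\<Sum>i\<in>{1..m}. y i * xi i)"
  define \<alpha> where "\<alpha> = (\<lambda>j. \<Sum>i\<in>{1..m}. y i * a i j)"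
  define C where "C = (\<Sum>j\<in>{1..n}. 2 * (\<alpha> j)\<^sup>2 / Y)"
  define B where "B = 2 * ((\<Sum>i\<in>{1..m}. y i * b i) + C) / Y"
  have Yp: "Y > 0" using Y by (simp add: Y_def)
  have "\<bar>p j\<bar> \<le> max 1 B" if p: "p \<in> lifted_feasible n m a b xi" and j: "j \<in> {0..n}" for p j
  proof -
    have sq: "(\<Sum>j\<in>{1..n}. (p j)\<^sup>2) \<le> p 0" using p by (simp add: lifted_feasible_def)
    have amgm: "(\<Sum>j\<in>{1..n}. - (Y / 2 * (p j)\<^sup>2 + 2 * (\<alpha> j)\<^sup>2 / Y)) \<le> (\<Sum>j\<in>{1..n}. 2 * (\<alpha> j * p j))"
      using Yp by (intro sum_mono neg_quadratic_le_linear)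
    have "(\<Sum>i\<in>{1..m}. y i * dot_on {0..n} (lift_row xi a i) p) \<le> (\<Sum>i\<in>{1..m}. y i * b i)"
      using p y by (intro sum_mono mult_left_mono) (auto simp: lifted_feasible_def)
    moreover have "(\<Sum>i\<in>{1..m}. y i * dot_on {0..n} (lift_row xi a i) p)
        = (\<Sum>i\<in>{1..m}. y i * xi i * p 0) + 2 * (\<Sum>i\<in>{1..m}. \<Sum>j\<in>{1..n}. y i * a i j * p j)"
      by (simp add: dot_lift_row algebra_simps sum.distrib sum_distrib_left)
    moreover have "(\<Sum>i\<in>{1..m}. y i * xi i * p 0) = Y * p 0"
      by (simp add: Y_def sum_distrib_right)
    moreover have "(\<Sum>i\<in>{1..m}. \<Sum>j\<in>{1..n}. y i * a i j * p j) = (\<Sum>j\<in>{1..n}. \<alpha> j * p j)"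
      unfolding \<alpha>_def sum_distrib_right by (rule sum.swap)
    moreover have "- (Y / 2 * (\<Sum>j\<in>{1..n}. (p j)\<^sup>2) + C) \<le> 2 * (\<Sum>j\<in>{1..n}. \<alpha> j * p j)"
      using amgm by (simp only: sum_negf sum.distrib sum_distrib_left[symmetric] C_def)
    moreover have "Y / 2 * (\<Sum>j\<in>{1..n}. (p j)\<^sup>2) \<le> Y / 2 * p 0"
      using sq Yp by (intro mult_left_mono) auto
    ultimately have "Y / 2 * p 0 \<le> (\<Sum>i\<in>{1..m}. y i * b i) + C" by linarith
    then have p0: "p 0 \<le> B" using Yp by (simp add: B_def field_simps)
    show ?thesis
    proof (cases "j = 0")
      case True
      then show ?thesis using p0 sq sum_nonneg[of "{1..n}" "\<lambda>j. (p j)\<^sup>2"] by auto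
    next
      case False
      then have "(p j)\<^sup>2 \<le> (\<Sum>j\<in>{1..n}. (p j)\<^sup>2)" using j by (intro member_le_sum) auto
      then show ?thesis using p0 sq by (intro abs_le_max_one_if_square_le) auto
    qed
  qed
  then show ?thesis by blast
qed

lemma tendsto_lifted_obj:
  assumes "\<forall>j\<in>{0..n}. (\<lambda>k. P k j) \<longlonglongrightarrow> L j"
  shows "(\<lambda>k. lifted_obj n D c (P k)) \<longlonglongrightarrow> lifted_obj n D c L"
  unfolding lifted_obj_def using assms by (intro tendsto_intros) auto

lemma tendsto_slack:
  assumes "\<forall>j\<in>{0..n}. (\<lambda>k. P k j) \<longlonglongrightarrow> L j"
  shows "(\<lambda>k. slack n (P k)) \<longlonglongrightarrow> slack n L"
  unfolding slack_def using assms by (intro tendsto_intros) auto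

lemma lifted_feasible_closed:
  assumes P: "\<forall>k. P k \<in> lifted_feasible n m a b xi" and L: "\<forall>j\<in>{0..n}. (\<lambda>k. P k j) \<longlonglongrightarrow> L j"
  shows "L \<in> lifted_feasible n m a b xi"
proof -
  have "dot_on {0..n} (lift_row xi a i) L \<le> b i" if "i \<in> {1..m}" for i
    using P that by (intro LIMSEQ_le_const2[OF tendsto_dot_on[OF L]]) (auto simp: lifted_feasible_def)
  moreover have "0 \<le> slack n L"
    using P by (intro LIMSEQ_le_const[OF tendsto_slack[OF L]]) (auto simp: lifted_feasible_def slack_def)
  ultimately show ?thesis by (simp add: lifted_feasible_def slack_def)
qed

lemma lifted_lexmin_exists:
  assumes y: "\<forall>i\<in>{1..m}. y i \<ge> 0" "(\<Sum>i\<in>{1..m}. y i * xi i) > 0"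
    and ne: "lifted_feasible n m a b xi \<noteq> {}"
  obtains ps where "ps \<in> lifted_feasible n m a b xi"
    and "\<forall>p\<in>lifted_feasible n m a b xi. lifted_obj n D c ps \<le> lifted_obj n D c p"
    and "\<forall>p\<in>lifted_feasible n m a b xi. lifted_obj n D c p = lifted_obj n D c ps \<longrightarrow> slack n ps \<le> slack n p"
proof -
  define K where "K = lifted_feasible n m a b xi"
  obtain B where B: "\<forall>p\<in>K. \<forall>j\<in>{0..n}. \<bar>p j\<bar> \<le> B"
    using lifted_feasible_bounded[OF y] unfolding K_def by blast
  have "\<exists>p\<in>K. \<forall>p'\<in>K. lifted_obj n D c p \<le> lifted_obj n D c p'"
  proof (rule coordwise_compact_attains_min[of "{0..n}" K B])
    show "K \<noteq> {}" using ne by (simp add: K_def)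
  qed (use B lifted_feasible_closed tendsto_lifted_obj in \<open>auto simp: K_def\<close>)
  then obtain pg where pg: "pg \<in> K" "\<forall>p'\<in>K. lifted_obj n D c pg \<le> lifted_obj n D c p'" by blast
  define Opt where "Opt = {p\<in>K. lifted_obj n D c p = lifted_obj n D c pg}"
  have Opt_closed: "L \<in> Opt"
    if P: "\<forall>k. P k \<in> Opt" and L: "\<forall>j\<in>{0..n}. (\<lambda>k. P k j) \<longlonglongrightarrow> L j" for P L
  proof -
    have eq: "(\<lambda>k. lifted_obj n D c (P k)) = (\<lambda>k. lifted_obj n D c pg)"
      using P by (simp add: Opt_def)
    have "(\<lambda>k. lifted_obj n D c pg) \<longlonglongrightarrow> lifted_obj n D c L"
      using tendsto_lifted_obj[OF L, of D c] unfolding eq .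
    then have "lifted_obj n D c L = lifted_obj n D c pg" using LIMSEQ_unique[OF tendsto_const] by metis
    with lifted_feasible_closed[OF _ L] P show ?thesis by (simp add: Opt_def K_def)
  qed
  have "\<exists>p\<in>Opt. \<forall>p'\<in>Opt. slack n p \<le> slack n p'"
  proof (rule coordwise_compact_attains_min[of "{0..n}" Opt B])
    show "Opt \<noteq> {}" using pg by (auto simp: Opt_def)
    show "\<forall>p\<in>Opt. \<forall>j\<in>{0..n}. \<bar>p j\<bar> \<le> B" using B by (simp add: Opt_def)
  qed (use Opt_closed tendsto_slack in auto)
  then obtain ps where "ps \<in> Opt" "\<forall>p'\<in>Opt. slack n ps \<le> slack n p'" by blast
  with pg show ?thesis using that by (auto simp: Opt_def K_def)
qed

subsection \<open>A lexicographic minimiser has zero slack\<close>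

lemma kernel_direction_reducing_slack:
  fixes x1 :: real
  assumes "finite A" "card A \<le> 1"
  obtains u w where "w - 2 * x1 * u \<le> 0" "w - 2 * x1 * u < 0 \<or> u \<noteq> 0"
    "\<forall>i\<in>A. xi i * w + 2 * a i 1 * u = 0"
proof -
  obtain u w where nz: "u \<noteq> 0 \<or> w \<noteq> 0" and ker: "\<forall>i\<in>A. xi i * w + 2 * a i 1 * u = 0"
  proof (cases "A = {}")
    case True
    then show ?thesis using that[of 0 1] by auto
  next
    case False
    with assms obtain i where "A = {i}"
      by (metis One_nat_def card_1_singletonE card_0_eq le_Suc_eq le_zero_eq)
    then show ?thesis
      using that[of "xi i" "- 2 * a i 1"] that[of 0 1] by (auto simp: algebra_simps)
  qed
  show ?thesis
  proof (cases "w - 2 * x1 * u \<le> 0")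
    case True
    with nz ker show ?thesis by (cases "u = 0") (auto intro: that[where u = u and w = w])
  next
    case False
    have "\<forall>i\<in>A. xi i * (- w) + 2 * a i 1 * (- u) = 0" using ker by (force simp: algebra_simps)
    with False nz show ?thesis by (intro that[where u = "- u" and w = "- w"]) auto
  qed
qed

lemma slack_add_scaled_w_x1:
  assumes "1 \<le> n"
  shows "slack n (\<lambda>j. p j + t * (if j = 0 then w else if j = 1 then u else 0))
    = slack n p + t * (w - 2 * p 1 * u) - t\<^sup>2 * u\<^sup>2"
proof -
  let ?q = "\<lambda>j. p j + t * (if j = 0 then w else if j = 1 then u else 0)"
  have "(\<Sum>j\<in>{1..n}. f j) = f 1 + (\<Sum>j\<in>{2..n}. f j)" for f :: "nat \<Rightarrow> real"
    using assms by (simp add: sum.atLeast_Suc_atMost numeral_2_eq_2)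
  moreover have "(\<Sum>j\<in>{2..n}. (?q j)\<^sup>2) = (\<Sum>j\<in>{2..n}. (p j)\<^sup>2)"
    by (rule sum.cong) auto
  ultimately show ?thesis
    by (simp add: slack_def power2_eq_square algebra_simps)
qed

lemma lifted_min_slack_reducible:
  assumes n: "1 \<le> n" and p: "p \<in> lifted_feasible n m a b xi"
    and opt: "\<forall>p'\<in>lifted_feasible n m a b xi. lifted_obj n D c p \<le> lifted_obj n D c p'"
    and s: "slack n p > 0" and few: "card (active_constraints n m a b xi p) \<le> 1"
  shows "\<exists>p'\<in>lifted_feasible n m a b xi. lifted_obj n D c p' = lifted_obj n D c p \<and> slack n p' < slack n p"
proof -
  define A where "A = active_constraints n m a b xi p"
  have "finite A" by (simp add: A_def active_constraints_def)
  then obtain u w where uw: "w - 2 * p 1 * u \<le> 0" "w - 2 * p 1 * u < 0 \<or> u \<noteq> 0"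
    "\<forall>i\<in>A. xi i * w + 2 * a i 1 * u = 0"
    using kernel_direction_reducing_slack few unfolding A_def by blast
  define y where "y = (\<lambda>j::nat. if j = 0 then w else if j = 1 then u else (0::real))"
  have sum_y: "(\<Sum>j\<in>{1..n}. f j * y j) = f 1 * u" for f
  proof -
    have "(\<Sum>j\<in>{1..n}. f j * y j) = (\<Sum>j\<in>{1..n}. if j = 1 then f 1 * u else 0)"
      by (rule sum.cong) (auto simp: y_def)
    then show ?thesis using n by simp
  qed
  have "dot_on {0..n} (lift_row xi a i) y = xi i * w + 2 * a i 1 * u" for i
    unfolding dot_lift_row sum_y by (simp add: y_def)
  then have along: "\<forall>i\<in>A. dot_on {0..n} (lift_row xi a i) y \<le> 0"
    and along_neg: "\<forall>i\<in>A. dot_on {0..n} (lift_row xi a i) (\<lambda>j. - y j) \<le> 0"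
    using uw(3) by (simp_all add: dot_on_uminus_right)
  have "dot_on {0..n} (lifted_grad n D c p) y \<ge> 0"
    and "dot_on {0..n} (lifted_grad n D c p) (\<lambda>j. - y j) \<ge> 0"
    using lifted_min_no_descent[OF p opt s] along along_neg by (simp_all add: A_def)
  then have "dot_on {0..n} (lifted_grad n D c p) y = 0" by (simp add: dot_on_uminus_right)
  moreover have "(\<Sum>j\<in>{1..n}. (D j - D 1) * (y j)\<^sup>2) = 0"
    by (rule sum.neutral) (auto simp: y_def)
  ultimately have obj: "lifted_obj n D c (\<lambda>j. p j + t * y j) = lifted_obj n D c p" for t
    by (simp add: lifted_obj_add_scaled)
  have "eventually (\<lambda>t. 0 < t \<and> (\<lambda>j. p j + t * y j) \<in> lifted_feasible n m a b xi) (at_right 0)"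
    using eventually_at_right_less lifted_feasible_eventually_along[OF p s] along
    unfolding A_def by (intro eventually_conj) auto
  then obtain t where t: "0 < t" "(\<lambda>j. p j + t * y j) \<in> lifted_feasible n m a b xi"
    using eventually_happens[of _ "at_right (0::real)"] by (auto simp: trivial_limit_at_right_real)
  have "slack n (\<lambda>j. p j + t * y j) = slack n p + t * (w - 2 * p 1 * u) - t\<^sup>2 * u\<^sup>2"
    unfolding y_def using n by (rule slack_add_scaled_w_x1)
  moreover have "t * (w - 2 * p 1 * u) \<le> 0" "t * (w - 2 * p 1 * u) < 0 \<or> t\<^sup>2 * u\<^sup>2 > 0"
    using uw(1,2) t(1) by (auto simp: mult_nonneg_nonpos mult_pos_neg)
  moreover have "t\<^sup>2 * u\<^sup>2 \<ge> 0" by simp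
  ultimately have "slack n (\<lambda>j. p j + t * y j) < slack n p" by linarith
  with t(2) obj show ?thesis by blast
qed

lemma lifted_min_kkt:
  assumes p: "p \<in> lifted_feasible n m a b xi"
    and opt: "\<forall>p'\<in>lifted_feasible n m a b xi. lifted_obj n D c p \<le> lifted_obj n D c p'"
    and s: "slack n p > 0"
  defines "A \<equiv> active_constraints n m a b xi p"
  obtains \<mu> where "\<forall>i. i \<notin> A \<longrightarrow> \<mu> i = 0" "\<forall>i\<in>A. \<mu> i \<ge> 0"
    "\<forall>j\<in>{0..n}. - lifted_grad n D c p j = (\<Sum>i\<in>A. \<mu> i * lift_row xi a i j)"
proof -
  have "finite A" by (simp add: A_def active_constraints_def)
  moreover have "\<forall>y. (\<forall>i\<in>A. dot_on {0..n} (lift_row xi a i) y \<le> 0)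
      \<longrightarrow> dot_on {0..n} (\<lambda>j. - lifted_grad n D c p j) y \<le> 0"
    using lifted_min_no_descent[OF p opt s] by (simp add: A_def dot_on_uminus_left)
  ultimately obtain \<mu> where "\<forall>i\<in>A. \<mu> i \<ge> 0"
    "\<forall>j\<in>{0..n}. - lifted_grad n D c p j = (\<Sum>i\<in>A. \<mu> i * lift_row xi a i j)"
    using farkas_lemma[of A "{0..n}"] by blast
  then show ?thesis
    by (intro that[of "\<lambda>i. if i \<in> A then \<mu> i else 0"]) (auto cong: sum.cong)
qed

lemma stationary_coord:
  assumes "j \<in> {1..n}"
    and "- lifted_grad n D c p j = (\<Sum>i\<in>A. \<mu> i * lift_row xi a i j)"
  shows "(D j - D 1) * p j = - (c j + (\<Sum>i\<in>A. a i j * \<mu> i))"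
proof -
  have "- (2 * ((D j - D 1) * p j) + 2 * c j) = 2 * (\<Sum>i\<in>A. a i j * \<mu> i)"
    using assms by (simp add: lifted_grad_def lift_row_def sum_distrib_left mult.commute mult.left_commute)
  then show ?thesis by linarith
qed

lemma kkt_point_sub_feasible:
  assumes n: "1 \<le> n" and um: "\<forall>j\<in>{1..n}. j \<noteq> 1 \<longrightarrow> D 1 < D j" and d1: "d1_star n D = D 1"
    and p: "p \<in> lifted_feasible n m a b xi"
    and A: "A = active_constraints n m a b xi p"
    and \<mu>: "\<forall>i. i \<notin> A \<longrightarrow> \<mu> i = 0" "\<forall>i\<in>A. \<mu> i \<ge> 0"
      "\<forall>j\<in>{0..n}. - lifted_grad n D c p j = (\<Sum>i\<in>A. \<mu> i * lift_row xi a i j)"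
  shows "(\<mu>, p 1, p 0) \<in> sub_feasible n m D c a b xi A"
    and "sub_obj n m D c a \<mu> (p 1) (p 0) = - slack n p"
proof -
  have "A \<subseteq> {1..m}" by (auto simp: A active_constraints_def)
  then have sum_A: "(\<Sum>i\<in>{1..m}. f i * \<mu> i) = (\<Sum>i\<in>A. f i * \<mu> i)" for f
    using \<mu>(1) by (intro sum.mono_neutral_right) auto
  have x_mu: "x_mu n m D c a \<mu> j = p j" if j: "j \<in> {1..n} - {1}" for j
  proof -
    have "(D j - D 1) * p j = - (c j + (\<Sum>i\<in>A. a i j * \<mu> i))"
      using j \<mu>(3) by (intro stationary_coord) auto
    moreover have "D j - D 1 > 0" using um j by auto
    ultimately show ?thesis unfolding x_mu_def d1 sum_A by (simp add: field_simps)
  qed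
  have split1: "(\<Sum>j\<in>{1..n}. f j) = f 1 + (\<Sum>j\<in>{1..n} - {1}. f j)" for f :: "nat \<Rightarrow> real"
    using n by (simp add: sum.remove)
  have constraint: "xi i * p 0 + 2 * a i 1 * p 1 + 2 * (\<Sum>j\<in>{1..n} - {1}. a i j * x_mu n m D c a \<mu> j)
      = dot_on {0..n} (lift_row xi a i) p" for i
    unfolding dot_lift_row split1[of "\<lambda>j. a i j * p j"] by (simp add: x_mu algebra_simps)
  show "(\<mu>, p 1, p 0) \<in> sub_feasible n m D c a b xi A"
    unfolding sub_feasible_def
  proof (simp only: mem_Collect_eq prod.case constraint, intro conjI)
    show "d1_star n D + (\<Sum>i\<in>A. xi i * \<mu> i) = 0"
      using \<mu>(3)[rule_format, of 0] by (simp add: d1 lifted_grad_def lift_row_def mult.commute)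
    have "(D 1 - D 1) * p 1 = - (c 1 + (\<Sum>i\<in>A. a i 1 * \<mu> i))"
      using n \<mu>(3) by (intro stationary_coord) auto
    then show "c 1 + (\<Sum>i\<in>A. a i 1 * \<mu> i) = 0" by simp
    show "\<forall>i\<in>A. dot_on {0..n} (lift_row xi a i) p = b i"
      and "\<forall>i\<in>{1..m} - A. dot_on {0..n} (lift_row xi a i) p \<le> b i"
      using p by (auto simp: A active_constraints_def lifted_feasible_def)
  qed (use \<mu>(1,2) in auto)
  show "sub_obj n m D c a \<mu> (p 1) (p 0) = - slack n p"
    unfolding sub_obj_def slack_def split1[of "\<lambda>j. (p j)\<^sup>2"] by (simp add: x_mu)
qed

lemma sub_val_active_le_neg_slack:
  assumes n: "1 \<le> n" and um: "\<forall>j\<in>{1..n}. j \<noteq> 1 \<longrightarrow> D 1 < D j" and d1: "d1_star n D = D 1"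
    and p: "p \<in> lifted_feasible n m a b xi"
    and opt: "\<forall>p'\<in>lifted_feasible n m a b xi. lifted_obj n D c p \<le> lifted_obj n D c p'"
    and s: "slack n p > 0"
  shows "sub_val n m D c a b xi (active_constraints n m a b xi p) \<le> ereal (- slack n p)"
proof -
  obtain \<mu> where \<mu>: "\<forall>i. i \<notin> active_constraints n m a b xi p \<longrightarrow> \<mu> i = 0"
    "\<forall>i\<in>active_constraints n m a b xi p. \<mu> i \<ge> 0"
    "\<forall>j\<in>{0..n}. - lifted_grad n D c p j
        = (\<Sum>i\<in>active_constraints n m a b xi p. \<mu> i * lift_row xi a i j)"
    using lifted_min_kkt[OF p opt s] by blast
  note kkt = kkt_point_sub_feasible[OF n um d1 p refl \<mu>]
  have "sub_val n m D c a b xi (active_constraints n m a b xi p) \<le> ereal (sub_obj n m D c a \<mu> (p 1) (p 0))"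
    unfolding sub_val_def using kkt(1) by (rule INF_lower2) simp
  then show ?thesis by (simp only: kkt(2))
qed

lemma lifted_lexmin_zero_slack:
  assumes n: "1 \<le> n" and um: "\<forall>j\<in>{1..n}. j \<noteq> 1 \<longrightarrow> D 1 < D j" and d1: "d1_star n D = D 1"
    and cond: "\<forall>I. I \<subseteq> {1..m} \<and> card I \<ge> 2 \<longrightarrow> sub_val n m D c a b xi I \<ge> 0"
    and p: "p \<in> lifted_feasible n m a b xi"
    and opt: "\<forall>p'\<in>lifted_feasible n m a b xi. lifted_obj n D c p \<le> lifted_obj n D c p'"
    and lex: "\<forall>p'\<in>lifted_feasible n m a b xi. lifted_obj n D c p' = lifted_obj n D c p \<longrightarrow> slack n p \<le> slack n p'"
  shows "slack n p = 0"
proof (rule ccontr)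
  assume "slack n p \<noteq> 0"
  moreover have "slack n p \<ge> 0" using p by (simp add: lifted_feasible_def slack_def)
  ultimately have s: "slack n p > 0" by simp
  show False
  proof (cases "card (active_constraints n m a b xi p) \<le> 1")
    case True
    then show False using lifted_min_slack_reducible[OF n p opt s] lex by fastforce
  next
    case False
    moreover have "active_constraints n m a b xi p \<subseteq> {1..m}"
      by (auto simp: active_constraints_def)
    ultimately have "0 \<le> sub_val n m D c a b xi (active_constraints n m a b xi p)"
      using cond by simp
    also have "\<dots> \<le> ereal (- slack n p)" by (rule sub_val_active_le_neg_slack[OF n um d1 p opt s])
    finally show False using s by simp
  qed
qed

subsection \<open>Sandwiching the Shor value\<close>

lemma v_star_le_c_star: "v_star n m D c a b xi \<le> c_star n m D c a b xi"
  unfolding c_star_def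
proof (rule INF_greatest)
  fix x assume x: "x \<in> P_feasible n m a b xi"
  let ?X = "\<lambda>j k. x j * x k"
  have "(x, ?X) \<in> Shor_feasible n m a b xi"
    using x by (simp add: Shor_feasible_def P_feasible_def psd_on_def shifted_def power2_eq_square)
  moreover have "Shor_obj n D c x ?X = P_obj n D c x"
    by (simp add: Shor_obj_def P_obj_def power2_eq_square)
  ultimately show "v_star n m D c a b xi \<le> ereal (P_obj n D c x)"
    unfolding v_star_def by (metis (no_types, lifting) INF_lower fst_conv snd_conv)
qed

lemma lifted_min_le_v_star:
  assumes D1: "\<forall>j\<in>{1..n}. D 1 \<le> D j"
    and opt: "\<forall>p'\<in>lifted_feasible n m a b xi. lifted_obj n D c p \<le> lifted_obj n D c p'"
  shows "ereal (lifted_obj n D c p) \<le> v_star n m D c a b xi"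
  unfolding v_star_def
proof (rule INF_greatest, clarify)
  fix x X assume "(x, X) \<in> Shor_feasible n m a b xi"
  then have lin: "\<forall>i\<in>{1..m}. xi i * (\<Sum>j\<in>{1..n}. X j j) + 2 * (\<Sum>j\<in>{1..n}. a i j * x j) \<le> b i"
    and psd: "psd_on {1..n} (shifted X x)" by (auto simp: Shor_feasible_def)
  have diag: "(x j)\<^sup>2 \<le> X j j" if "j \<in> {1..n}" for j
    using psd_on_diag_nonneg[OF psd _ that] by (simp add: shifted_def power2_eq_square)
  let ?p = "\<lambda>j. if j = 0 then (\<Sum>j\<in>{1..n}. X j j) else x j"
  have "?p \<in> lifted_feasible n m a b xi"
    using diag by (intro lift_in_lifted_feasible[OF lin] sum_mono)
  then have "lifted_obj n D c p \<le> lifted_obj n D c ?p" using opt by blast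
  also have "lifted_obj n D c ?p = (\<Sum>j\<in>{1..n}. (D j - D 1) * (x j)\<^sup>2) + 2 * (\<Sum>j\<in>{1..n}. c j * x j)
      + D 1 * (\<Sum>j\<in>{1..n}. X j j)"
  proof -
    have "(\<Sum>j\<in>{1..n}. (D j - D 1) * (?p j)\<^sup>2) = (\<Sum>j\<in>{1..n}. (D j - D 1) * (x j)\<^sup>2)"
      and "(\<Sum>j\<in>{1..n}. c j * ?p j) = (\<Sum>j\<in>{1..n}. c j * x j)"
      by (auto intro: sum.cong)
    then show ?thesis unfolding lifted_obj_def by simp
  qed
  also have "\<dots> \<le> (\<Sum>j\<in>{1..n}. (D j - D 1) * X j j) + 2 * (\<Sum>j\<in>{1..n}. c j * x j)
      + D 1 * (\<Sum>j\<in>{1..n}. X j j)"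
    using D1 diag by (intro add_right_mono sum_mono mult_left_mono) auto
  also have "\<dots> = Shor_obj n D c x X"
    by (simp add: Shor_obj_def algebra_simps sum_subtractf sum_distrib_left)
  finally show "ereal (lifted_obj n D c p) \<le> ereal (Shor_obj n D c (fst (x, X)) (snd (x, X)))" by simp
qed

lemma c_star_le_lifted_obj:
  assumes p: "p \<in> lifted_feasible n m a b xi" and s: "slack n p = 0"
  shows "c_star n m D c a b xi \<le> ereal (lifted_obj n D c p)"
proof -
  have p0: "p 0 = (\<Sum>j\<in>{1..n}. (p j)\<^sup>2)" using s by (simp add: slack_def)
  then have "p \<in> P_feasible n m a b xi"
    using p by (simp add: P_feasible_def lifted_feasible_iff)
  moreover have "P_obj n D c p = lifted_obj n D c p"
    unfolding P_obj_def lifted_obj_def p0 by (simp add: algebra_simps sum_subtractf sum_distrib_left)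
  ultimately show ?thesis unfolding c_star_def by (metis INF_lower)
qed

theorem mainTheorem13:
  fixes n m :: nat
    and D c b xi :: "nat \<Rightarrow> real"
    and a :: "nat \<Rightarrow> nat \<Rightarrow> real"
  assumes n_pos: "1 \<le> n"
    and unique_min: "\<forall>j\<in>{1..n}. j \<noteq> 1 \<longrightarrow> D 1 < D j"
    and P_feas: "P_feasible n m a b xi \<noteq> {}"
    and ybar: "\<exists>y::nat \<Rightarrow> real. (\<forall>i\<in>{1..m}. y i \<ge> 0) \<and> (\<Sum>i\<in>{1..m}. y i * xi i) > 0"
    and slater: "\<exists>x X. Shor_strictly_feasible n m a b xi x X"
    and cond: "\<forall>I. I \<subseteq> {1..m} \<and> card I \<ge> 2 \<longrightarrow> sub_val n m D c a b xi I \<ge> 0"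
  shows "v_star n m D c a b xi = c_star n m D c a b xi"
proof -
  have D1: "\<forall>j\<in>{1..n}. D 1 \<le> D j" using unique_min by (auto simp: less_imp_le)
  then have d1: "d1_star n D = D 1" unfolding d1_star_def using n_pos by (intro Min_eqI) auto
  obtain y where y: "\<forall>i\<in>{1..m}. y i \<ge> 0" "(\<Sum>i\<in>{1..m}. y i * xi i) > 0" using ybar by blast
  obtain x where "x \<in> P_feasible n m a b xi" using P_feas by blast
  then have "(\<lambda>j. if j = 0 then \<Sum>j\<in>{1..n}. (x j)\<^sup>2 else x j) \<in> lifted_feasible n m a b xi"
    by (intro lift_in_lifted_feasible) (auto simp: P_feasible_def)
  then have "lifted_feasible n m a b xi \<noteq> {}" by blast
  then obtain p where p: "p \<in> lifted_feasible n m a b xi"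
    and opt: "\<forall>p'\<in>lifted_feasible n m a b xi. lifted_obj n D c p \<le> lifted_obj n D c p'"
    and lex: "\<forall>p'\<in>lifted_feasible n m a b xi. lifted_obj n D c p' = lifted_obj n D c p \<longrightarrow> slack n p \<le> slack n p'"
    using lifted_lexmin_exists[OF y] by blast
  have "slack n p = 0" by (rule lifted_lexmin_zero_slack[OF n_pos unique_min d1 cond p opt lex])
  then have "c_star n m D c a b xi \<le> ereal (lifted_obj n D c p)" by (rule c_star_le_lifted_obj[OF p])
  also have "\<dots> \<le> v_star n m D c a b xi" by (rule lifted_min_le_v_star[OF D1 opt])
  finally show ?thesis using v_star_le_c_star by (rule antisym[rotated])
qed

end
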